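(* Let $I$ be a nonempty set and let $A$ be a topologically independent subset of $(\mathbb{C}^\times)^I$. Then for every $i\in I$ the set $\{a\in A : |a(i)|\neq 1\}$ is finite.
   Context: $\mathbb{C}^\times$ is the multiplicative group of nonzero complex numbers with the Euclidean topology; $(\mathbb{C}^\times)^I$ carries the product topology and coordinatewise multiplication, with neutral element $e$ the constant function $1$. A subset $A$ of an abelian topological group $G$ (multiplicative notation, neutral element $e$) is topologically independent if $e\notin A$ and for every neighborhood $W$ of $e$ there is a neighborhood $U$ of $e$ such that for every finite $F\subseteq A$ and every family of integers $\{z_a: a\in F\}$, the condition $\prod_{a\in F}a^{z_a}\in U$ implies $a^{z_a}\in W$ for all $a\in F$. *)

theory Defs
  imports "HOL-Analysis.Analysis"
begin

text \<open>The group (C^x)^I, with I represented by the (nonempty) type 'i.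
  Its topology is the subspace topology of the product topology on 'i \<Rightarrow> complex
  (the open sets of 'i \<Rightarrow> complex are those of the product topology).\<close>

definition Cstar_pow :: "('i \<Rightarrow> complex) set" where
  "Cstar_pow = {f. \<forall>i. f i \<noteq> 0}"

definition unit_fun :: "'i \<Rightarrow> complex" where
  "unit_fun = (\<lambda>_. 1)"

definition nbhd_e :: "('i \<Rightarrow> complex) set \<Rightarrow> bool" where
  "nbhd_e W \<longleftrightarrow> W \<subseteq> Cstar_pow \<and>
     (\<exists>V. open V \<and> unit_fun \<in> V \<and> V \<inter> Cstar_pow \<subseteq> W)"

definition topo_indep :: "('i \<Rightarrow> complex) set \<Rightarrow> bool" where
  "topo_indep A \<longleftrightarrow> unit_fun \<notin> A \<and>
     (\<forall>W. nbhd_e W \<longrightarrow> (\<exists>U. nbhd_e U \<and>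
        (\<forall>F (z :: ('i \<Rightarrow> complex) \<Rightarrow> int). finite F \<and> F \<subseteq> A \<and>
            (\<lambda>i. \<Prod>a\<in>F. a i powi z a) \<in> U \<longrightarrow>
            (\<forall>a\<in>F. (\<lambda>i. a i powi z a) \<in> W))))"

end

theory Submission
  imports Defs
begin

text \<open>Suppose infinitely many a \<in> A have |a(i)| \<noteq> 1. Independence applied to the
  neighbourhood W = {f. 1/2 < |f(i)| < 2} yields a neighbourhood U, which contains a box
  {f. |f(j) - 1| < \<epsilon> for j \<in> J} with J finite. Choose |J| + 1 of these elements a. The
  vectors (ln |a(j)|)_{j \<in> J} are linearly dependent; scaling a dependence and approximating
  it, together with the arguments of the corresponding combination of logarithms, by
  Dirichlet's simultaneous approximation gives integers z_a with \<Prod> a^{z_a} in the box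
  while |z_{a1}| is as large as we like for a fixed a1 with nonzero coefficient. Then
  a1^{z_{a1}} must lie in W, which is impossible as |a1(i)| \<noteq> 1.\<close>

lemma exists_nontrivial_linear_relation:
  fixes u :: "'k \<Rightarrow> 'j \<Rightarrow> real"
  assumes "finite J" "finite K" "card J < card K"
  shows "\<exists>c. (\<exists>k\<in>K. c k \<noteq> 0) \<and> (\<forall>j\<in>J. (\<Sum>k\<in>K. c k * u k j) = 0)"
  using assms
proof (induction J arbitrary: K u rule: finite_induct)
  case empty
  then show ?case by (intro exI[of _ "\<lambda>_. 1"]) (auto simp: card_gt_0_iff)
next
  case (insert j0 J)
  show ?case
  proof (cases "\<forall>k\<in>K. u k j0 = 0")
    case True
    with insert show ?thesis by fastforce
  next
    case False
    then obtain k0 where k0: "k0 \<in> K" "u k0 j0 \<noteq> 0" by auto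
    define K' where "K' = K - {k0}"
    \<comment> \<open>Gaussian elimination of the coordinate j0 using the vector k0.\<close>
    define v where "v = (\<lambda>k j. u k j - u k j0 / u k0 j0 * u k0 j)"
    have "card J < card K'" using insert k0 by (simp add: K'_def)
    then obtain c' where c': "\<exists>k\<in>K'. c' k \<noteq> 0" "\<forall>j\<in>J. (\<Sum>k\<in>K'. c' k * v k j) = 0"
      using insert.IH[of K' v] insert.prems(1) by (auto simp: K'_def)
    define s where "s = (\<Sum>k\<in>K'. c' k * u k j0)"
    define c where "c = c'(k0 := - s / u k0 j0)"
    have sum_c: "(\<Sum>k\<in>K. c k * u k j) = - s / u k0 j0 * u k0 j + (\<Sum>k\<in>K'. c' k * u k j)" for j
    proof -
      have "(\<Sum>k\<in>K'. c k * u k j) = (\<Sum>k\<in>K'. c' k * u k j)"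
        by (intro sum.cong) (auto simp: c_def K'_def)
      then show ?thesis
        using k0 insert.prems(1) by (simp add: K'_def c_def sum.remove)
    qed
    have "(\<Sum>k\<in>K'. c' k * u k j) = s * (u k0 j / u k0 j0)" if "j \<in> J" for j
    proof -
      have "(\<Sum>k\<in>K'. c' k * u k j) = (\<Sum>k\<in>K'. c' k * v k j + c' k * u k j0 * (u k0 j / u k0 j0))"
        unfolding v_def by (intro sum.cong) (auto simp: algebra_simps)
      also have "\<dots> = (\<Sum>k\<in>K'. c' k * v k j) + s * (u k0 j / u k0 j0)"
        unfolding s_def by (simp add: sum.distrib sum_distrib_right sum_divide_distrib)
      finally show ?thesis using c'(2) that by simp
    qed
    then have "\<forall>j\<in>insert j0 J. (\<Sum>k\<in>K. c k * u k j) = 0"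
      using k0(2) by (auto simp: sum_c s_def)
    moreover have "\<exists>k\<in>K. c k \<noteq> 0" using c'(1) by (auto simp: c_def K'_def)
    ultimately show ?thesis by blast
  qed
qed

lemma open_fun_contains_box:
  fixes V :: "('i \<Rightarrow> 'b::metric_space) set"
  assumes "open V" "x \<in> V"
  obtains J e where "finite J" "e > 0" "\<And>f. \<forall>j\<in>J. dist (f j) (x j) < e \<Longrightarrow> f \<in> V"
proof -
  have "openin (product_topology (\<lambda>i. euclidean) UNIV) V"
    using assms(1) by (simp add: open_fun_def)
  from product_topology_open_contains_basis[OF this assms(2)]
  obtain X where X: "x \<in> (\<Pi>\<^sub>E i\<in>UNIV. X i)" "\<And>i. open (X i)" "finite {i. X i \<noteq> UNIV}"
    "(\<Pi>\<^sub>E i\<in>UNIV. X i) \<subseteq> V" by auto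
  define J where "J = {i. X i \<noteq> UNIV}"
  have "\<exists>e>0. ball (x j) e \<subseteq> X j" for j
    using X(1,2) open_contains_ball by (fastforce simp: PiE_iff)
  then obtain e where e: "\<And>j. e j > 0" "\<And>j. ball (x j) (e j) \<subseteq> X j" by metis
  define E where "E = (if J = {} then 1 else Min (e ` J))"
  have "E > 0" using e X(3) by (simp add: E_def J_def)
  moreover have "f \<in> V" if f: "\<forall>j\<in>J. dist (f j) (x j) < E" for f
  proof -
    have "f j \<in> X j" for j
    proof (cases "j \<in> J")
      case True
      then have "E \<le> e j" using X(3) by (auto simp: E_def J_def)
      then show ?thesis using f True e(2)[of j] by (force simp: dist_commute)
    qed (simp add: J_def)
    then show ?thesis using X(4) by auto
  qed
  ultimately show ?thesis using that X(3) J_def by blast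
qed

lemma nbhd_e_contains_box:
  assumes "nbhd_e U"
  obtains J e where "finite J" "e > 0"
    "\<And>f. f \<in> Cstar_pow \<Longrightarrow> \<forall>j\<in>J. cmod (f j - 1) < e \<Longrightarrow> f \<in> U"
proof -
  obtain V where V: "open V" "unit_fun \<in> V" "V \<inter> Cstar_pow \<subseteq> U"
    using assms by (auto simp: nbhd_e_def)
  obtain J e where "finite J" "e > 0" "\<And>f. \<forall>j\<in>J. cmod (f j - 1) < e \<Longrightarrow> f \<in> V"
    using open_fun_contains_box[OF V(1,2)] by (auto simp: unit_fun_def dist_norm)
  with V(3) that show ?thesis by blast
qed

lemma nbhd_e_coordinate_preimage:
  fixes i :: 'i
  assumes "open S" "1 \<in> S"
  shows "nbhd_e {f \<in> Cstar_pow. f i \<in> S}"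
proof -
  have "open {f :: 'i \<Rightarrow> complex. \<forall>j\<in>{i}. f (id j) \<in> S}"
    using assms(1) by (intro product_topology_basis') auto
  then show ?thesis
    using assms(2) unfolding nbhd_e_def unit_fun_def
    by (intro conjI exI[of _ "{f. f i \<in> S}"]) auto
qed

lemma Dirichlet_approx_simult_finite:
  fixes \<theta> :: "'a \<Rightarrow> real" and N :: nat
  assumes "finite X" "N > 0"
  obtains q p where "0 < q" "\<And>x. x \<in> X \<Longrightarrow> \<bar>of_int q * \<theta> x - of_int (p x)\<bar> < 1 / N"
proof -
  obtain e where e: "bij_betw e {0..<card X} X"
    using ex_bij_betw_nat_finite[OF assms(1)] by blast
  obtain q p where "0 < q"
    and qp: "\<And>k. k < card X \<Longrightarrow> \<bar>of_int q * \<theta> (e k) - of_int (p k)\<bar> < 1 / N"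
    using Dirichlet_approx_simult[OF assms(2), where \<theta> = "\<theta> \<circ> e" and n = "card X"]
    by (metis comp_apply)
  have "\<bar>of_int q * \<theta> x - of_int (p (inv_into {0..<card X} e x))\<bar> < 1 / N" if "x \<in> X" for x
    using qp[of "inv_into {0..<card X} e x"] inv_into_into[of x e "{0..<card X}"] e that
    by (auto simp: bij_betw_def f_inv_into_f)
  then show ?thesis using \<open>0 < q\<close> that[of q "\<lambda>x. p (inv_into {0..<card X} e x)"] by blast
qed

lemma norm_integer_combination_minus_2pi_multiple_le:
  fixes w :: "'a \<Rightarrow> complex" and c :: "'a \<Rightarrow> real"
  assumes "(\<Sum>a\<in>K. c a * Re (w a)) = 0"
    and "\<And>a. a \<in> K \<Longrightarrow> \<bar>of_int (z a) - of_int q * c a\<bar> \<le> \<eta>"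
    and "\<bar>of_int q * ((\<Sum>a\<in>K. c a * Im (w a)) / (2 * pi)) - of_int h\<bar> \<le> \<eta>"
  shows "cmod ((\<Sum>a\<in>K. of_int (z a) * w a) - \<i> * (of_int h * (of_real pi * 2)))
           \<le> ((\<Sum>a\<in>K. cmod (w a)) + 2 * pi) * \<eta>"
proof -
  define t where "t = (\<Sum>a\<in>K. c a * Im (w a)) / (2 * pi)"
  have "(\<Sum>a\<in>K. c a * w a) = \<i> * of_real (2 * pi * t)"
    using assms(1) by (simp add: t_def complex_eq_iff)
  moreover have "(\<Sum>a\<in>K. of_int (z a) * w a)
      = (\<Sum>a\<in>K. of_real (of_int (z a) - of_int q * c a) * w a) + of_int q * (\<Sum>a\<in>K. c a * w a)"
    by (simp add: algebra_simps sum.distrib sum_subtractf sum_distrib_left)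
  ultimately have split: "(\<Sum>a\<in>K. of_int (z a) * w a) - \<i> * (of_int h * (of_real pi * 2))
      = (\<Sum>a\<in>K. of_real (of_int (z a) - of_int q * c a) * w a)
        + \<i> * of_real (2 * pi * (of_int q * t - of_int h))"
    by (simp add: algebra_simps)
  have "cmod (\<Sum>a\<in>K. of_real (of_int (z a) - of_int q * c a) * w a) \<le> (\<Sum>a\<in>K. cmod (w a) * \<eta>)"
  proof (rule order.trans[OF norm_sum sum_mono])
    fix a assume "a \<in> K"
    from mult_right_mono[OF assms(2)[OF this] norm_ge_zero[of "w a"]]
    show "cmod (of_real (of_int (z a) - of_int q * c a) * w a) \<le> cmod (w a) * \<eta>"
      by (simp only: norm_mult norm_of_real mult.commute)
  qed
  moreover have "cmod (\<i> * of_real (2 * pi * (of_int q * t - of_int h))) \<le> 2 * pi * \<eta>"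
    using mult_left_mono[OF assms(3), of "2 * pi"]
    by (simp only: norm_mult norm_of_real t_def) (simp add: abs_mult)
  ultimately show ?thesis
    unfolding split distrib_right sum_distrib_right
    by (meson add_mono norm_triangle_ineq order.trans)
qed

lemma integer_combination_near_one:
  fixes w :: "'a \<Rightarrow> 'j \<Rightarrow> complex" and c :: "'a \<Rightarrow> real"
  assumes "finite K" "finite J" "\<epsilon> > 0"
    and relation: "\<And>j. j \<in> J \<Longrightarrow> (\<Sum>a\<in>K. c a * Re (w a j)) = 0"
  obtains q :: int and z :: "'a \<Rightarrow> int"
  where "0 < q" "\<And>a. a \<in> K \<Longrightarrow> \<bar>of_int q * c a - of_int (z a)\<bar> \<le> 1"
    and "\<And>j. j \<in> J \<Longrightarrow> cmod (exp (\<Sum>a\<in>K. of_int (z a) * w a j) - 1) < \<epsilon>"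
proof -
  obtain \<delta> where "\<delta> > 0" and \<delta>: "\<And>y. cmod y < \<delta> \<Longrightarrow> cmod (exp y - 1) < \<epsilon>"
    using continuous_at_eps_delta[THEN iffD1, OF isCont_exp[of 0], rule_format, OF \<open>\<epsilon> > 0\<close>]
    by (auto simp: dist_norm)
  define C where "C j = (\<Sum>a\<in>K. cmod (w a j)) + 2 * pi" for j
  have "\<forall>\<^sub>F N in sequentially. N > 0 \<and> (\<forall>j\<in>J. C j / real N < \<delta>)"
  proof (intro eventually_conj eventually_ball_finite ballI \<open>finite J\<close>)
    show "\<forall>\<^sub>F N in sequentially. 0 < N" by (rule eventually_gt_at_top)
    show "\<forall>\<^sub>F N in sequentially. C j / real N < \<delta>" for j
      using \<open>\<delta> > 0\<close> by (intro order_tendstoD(2)[OF lim_const_over_n])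
  qed
  then obtain N :: nat where "N > 0" and N: "\<And>j. j \<in> J \<Longrightarrow> C j / real N < \<delta>"
    using eventually_sequentially by auto
  \<comment> \<open>Approximating t as well makes the imaginary parts close to multiples of 2 pi.\<close>
  define t where "t j = (\<Sum>a\<in>K. c a * Im (w a j)) / (2 * pi)" for j
  obtain q p where "0 < q" and qp: "\<And>x. x \<in> Inl ` K \<union> Inr ` J \<Longrightarrow>
      \<bar>of_int q * case_sum c t x - of_int (p x)\<bar> < 1 / N"
    using Dirichlet_approx_simult_finite[OF _ \<open>N > 0\<close>, of "Inl ` K \<union> Inr ` J" "case_sum c t"]
      \<open>finite K\<close> \<open>finite J\<close> by blast
  define z where "z a = p (Inl a)" for a
  have z: "\<bar>of_int (z a) - of_int q * c a\<bar> \<le> 1 / N" if "a \<in> K" for a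
    using qp[of "Inl a"] that by (simp add: z_def abs_minus_commute)
  have "cmod (exp (\<Sum>a\<in>K. of_int (z a) * w a j) - 1) < \<epsilon>" if "j \<in> J" for j
  proof -
    have "cmod ((\<Sum>a\<in>K. of_int (z a) * w a j) - \<i> * (of_int (p (Inr j)) * (of_real pi * 2)))
        \<le> C j * (1 / N)"
      unfolding C_def using qp[of "Inr j"] that relation[OF that] z
      by (intro norm_integer_combination_minus_2pi_multiple_le[where c = c and q = q])
        (auto simp: t_def)
    also have "\<dots> < \<delta>" using N[OF that] by simp
    finally have "cmod (exp ((\<Sum>a\<in>K. of_int (z a) * w a j)
        - \<i> * (of_int (p (Inr j)) * (of_real pi * 2))) - 1) < \<epsilon>"
      by (rule \<delta>)
    then show ?thesis by (simp add: exp_diff)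
  qed
  moreover have "\<bar>of_int q * c a - of_int (z a)\<bar> \<le> 1" if "a \<in> K" for a
  proof -
    have "1 / real N \<le> 1" using \<open>N > 0\<close> by simp
    with z[OF that] show ?thesis by (metis abs_minus_commute order.trans)
  qed
  ultimately show ?thesis using that \<open>0 < q\<close> by blast
qed

lemma exists_large_exponent_near_one:
  fixes w :: "'a \<Rightarrow> 'j \<Rightarrow> complex"
  assumes "finite K" "finite J" "card J < card K"
  shows "\<exists>a1\<in>K. \<forall>T \<epsilon>. \<epsilon> > 0 \<longrightarrow> (\<exists>z :: 'a \<Rightarrow> int. T \<le> \<bar>real_of_int (z a1)\<bar> \<and>
           (\<forall>j\<in>J. cmod (exp (\<Sum>a\<in>K. of_int (z a) * w a j) - 1) < \<epsilon>))"
proof -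
  obtain c0 where c0: "\<exists>a\<in>K. c0 a \<noteq> 0" "\<forall>j\<in>J. (\<Sum>a\<in>K. c0 a * Re (w a j)) = 0"
    using exists_nontrivial_linear_relation[OF assms(2,1,3), of "\<lambda>a j. Re (w a j)"] by blast
  then obtain a1 where "a1 \<in> K" "c0 a1 \<noteq> 0" by blast
  have "\<exists>z :: 'a \<Rightarrow> int. T \<le> \<bar>real_of_int (z a1)\<bar> \<and>
          (\<forall>j\<in>J. cmod (exp (\<Sum>a\<in>K. of_int (z a) * w a j) - 1) < \<epsilon>)" if "\<epsilon> > 0" for T \<epsilon> :: real
  proof -
    define c where "c a = c0 a * ((\<bar>T\<bar> + 1) / \<bar>c0 a1\<bar>)" for a
    have "(\<Sum>a\<in>K. c a * Re (w a j)) = 0" if "j \<in> J" for j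
    proof -
      have "(\<Sum>a\<in>K. c a * Re (w a j)) = (\<bar>T\<bar> + 1) / \<bar>c0 a1\<bar> * (\<Sum>a\<in>K. c0 a * Re (w a j))"
        by (simp add: c_def sum_distrib_left mult_ac)
      then show ?thesis using c0(2) that by simp
    qed
    then obtain q z where "0 < q" and z: "\<And>a. a \<in> K \<Longrightarrow> \<bar>of_int q * c a - of_int (z a)\<bar> \<le> 1"
      and near: "\<And>j. j \<in> J \<Longrightarrow> cmod (exp (\<Sum>a\<in>K. of_int (z a) * w a j) - 1) < \<epsilon>"
      using integer_combination_near_one[OF assms(1,2) \<open>\<epsilon> > 0\<close>, of c w] by blast
    have "\<bar>c a1\<bar> = \<bar>T\<bar> + 1"
      using \<open>c0 a1 \<noteq> 0\<close> by (simp add: c_def abs_mult)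
    then have "\<bar>T\<bar> + 1 \<le> \<bar>of_int q * c a1\<bar>"
      using \<open>0 < q\<close> by (simp add: abs_mult mult_le_cancel_right1) linarith
    then have "T \<le> \<bar>real_of_int (z a1)\<bar>"
      using z[OF \<open>a1 \<in> K\<close>] by linarith
    with near show ?thesis by blast
  qed
  with \<open>a1 \<in> K\<close> show ?thesis by blast
qed

lemma prod_power_int_eq_exp_sum_Ln:
  fixes x :: "'a \<Rightarrow> complex"
  assumes "finite K" "\<And>a. a \<in> K \<Longrightarrow> x a \<noteq> 0"
  shows "(\<Prod>a\<in>K. x a powi z a) = exp (\<Sum>a\<in>K. of_int (z a) * Ln (x a))"
proof -
  have "x a powi z a = exp (of_int (z a) * Ln (x a))" if "a \<in> K" for a
    using exp_power_int[of "Ln (x a)" "z a"] assms(2)[OF that] by simp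
  then show ?thesis by (simp add: exp_sum[OF assms(1)])
qed

lemma norm_power_int_outside_annulus:
  fixes x :: complex
  assumes "x \<noteq> 0" "cmod x \<noteq> 1" "ln 2 / \<bar>ln (cmod x)\<bar> \<le> \<bar>real_of_int n\<bar>"
  shows "cmod (x powi n) \<le> 1 / 2 \<or> 2 \<le> cmod (x powi n)"
proof -
  have "ln (cmod x) \<noteq> 0" using assms(1,2) by simp
  then have "ln 2 \<le> \<bar>of_int n * ln (cmod x)\<bar>"
    using assms(3) by (simp add: abs_mult divide_le_eq)
  then have "of_int n * ln (cmod x) \<le> - ln 2 \<or> ln 2 \<le> of_int n * ln (cmod x)"
    by linarith
  then have "exp (of_int n * ln (cmod x)) \<le> exp (- ln 2) \<or> exp (ln 2) \<le> exp (of_int n * ln (cmod x))"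
    by (meson exp_le_cancel_iff)
  moreover have "cmod (x powi n) = exp (of_int n * ln (cmod x))"
    using assms(1) exp_power_int[of "ln (cmod x)" n] by (simp add: norm_power_int)
  ultimately show ?thesis by (simp add: exp_minus)
qed

theorem lemma2p5:
  fixes A :: "('i \<Rightarrow> complex) set"
  assumes "A \<subseteq> Cstar_pow"
    and "topo_indep A"
  shows "\<forall>i. finite {a \<in> A. cmod (a i) \<noteq> 1}"
proof (rule allI, rule ccontr)
  fix i
  assume "infinite {a \<in> A. cmod (a i) \<noteq> 1}"
  define W where "W = {f \<in> Cstar_pow. f i \<in> {x. 1 / 2 < cmod x \<and> cmod x < 2}}"
  have "nbhd_e W"
    unfolding W_def by (intro nbhd_e_coordinate_preimage open_Collect_conj open_Collect_less
        continuous_intros) auto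
  then obtain U where "nbhd_e U" and U: "\<And>F z. finite F \<and> F \<subseteq> A \<and>
      (\<lambda>j. \<Prod>a\<in>F. a j powi z a) \<in> U \<Longrightarrow> \<forall>a\<in>F. (\<lambda>j. a j powi z a) \<in> W"
    using assms(2) unfolding topo_indep_def by blast
  obtain J \<epsilon> where "finite J" "\<epsilon> > 0"
    and box: "\<And>f. f \<in> Cstar_pow \<Longrightarrow> \<forall>j\<in>J. cmod (f j - 1) < \<epsilon> \<Longrightarrow> f \<in> U"
    using nbhd_e_contains_box[OF \<open>nbhd_e U\<close>] by blast
  obtain K where "finite K" "card K = card J + 1" and K: "K \<subseteq> {a \<in> A. cmod (a i) \<noteq> 1}"
    using infinite_arbitrarily_large[OF \<open>infinite _\<close>, of "card J + 1"] by blast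
  have nonzero: "a j \<noteq> 0" if "a \<in> K" for a j
    using K assms(1) that by (auto simp: Cstar_pow_def)
  obtain a1 where "a1 \<in> K" and large: "\<And>T. \<exists>z :: _ \<Rightarrow> int. T \<le> \<bar>real_of_int (z a1)\<bar> \<and>
      (\<forall>j\<in>J. cmod (exp (\<Sum>a\<in>K. of_int (z a) * Ln (a j)) - 1) < \<epsilon>)"
    using exists_large_exponent_near_one[OF \<open>finite K\<close> \<open>finite J\<close>, of "\<lambda>a j. Ln (a j)"]
      \<open>card K = card J + 1\<close> \<open>\<epsilon> > 0\<close> by (auto simp del: One_nat_def)
  then obtain z where z: "ln 2 / \<bar>ln (cmod (a1 i))\<bar> \<le> \<bar>real_of_int (z a1)\<bar>"
    and near: "\<forall>j\<in>J. cmod (exp (\<Sum>a\<in>K. of_int (z a) * Ln (a j)) - 1) < \<epsilon>"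
    by blast
  have "(\<lambda>j. \<Prod>a\<in>K. a j powi z a) \<in> U"
    using near nonzero
    by (intro box) (auto simp: Cstar_pow_def prod_power_int_eq_exp_sum_Ln[OF \<open>finite K\<close>])
  then have "1 / 2 < cmod (a1 i powi z a1) \<and> cmod (a1 i powi z a1) < 2"
    using U[of K z] \<open>finite K\<close> K \<open>a1 \<in> K\<close> by (auto simp: W_def)
  moreover have "cmod (a1 i powi z a1) \<le> 1 / 2 \<or> 2 \<le> cmod (a1 i powi z a1)"
    using K \<open>a1 \<in> K\<close> nonzero z by (intro norm_power_int_outside_annulus) auto
  ultimately show False by linarith
qed

end
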